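(* Consider $\min_xF(x)=f(x)+r(x)$ with $f=\frac1n\sum_{i=1}^nf_i$, each $f_i$ differentiable with $\|\nabla f_i(x)\|\le G_i$ where $0<G_1\le\dots\le G_n$, $\nabla f_i$ $L_i$-Lipschitz, $r$ possibly non-convex non-smooth with existing proximal mapping, $F$ attaining its minimum $F(x^* )$, $\tilde L=\frac1n\sum_iL_i>0$. Let $b\in\{1,\dots,n\}$, let $k$ be the largest integer in $[n]$ with $0<b+k-n\le\frac{\sum_{j=1}^kG_j}{G_k}$, and set $p_i=(b+k-n)\frac{G_i}{\sum_{j=1}^kG_j}$ for $i\le k$ and $p_i=1$ for $i>k$. Run ProxSGD with independent sampling with these probabilities and stepsize $0<\eta<\frac1{2\tilde L}$: $g_t=\sum_{i\in S_t}\frac1{np_i}\nabla f_i(x_t)$, $x_{t+1}\in\mathrm{prox}_{\eta r}(x_t-\eta g_t)$. Then for all $T\ge1$, $$\frac1T\sum_{t=1}^TE\big[\mathrm{dist}(0,\hat\partial F(x_{t+1}))^2\big]\le\frac{C_1}{n^2}\cdot\frac{1}{b+k-n}\Big(\sum_{i=1}^kG_i\Big)^2+\frac{C_2}{T}\Delta,$$ where $C_1=\frac{1+4\tilde L\eta-2\tilde L^2\eta^2}{\tilde L\eta-2\tilde L^2\eta^2}$, $C_2=\frac{2+4\tilde L\eta+4\tilde L^2\eta^2}{\eta-2\tilde L\eta^2}$, $\Delta=F(x_1)-F(x^* )$.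
   Context: Independent sampling: at each iteration, each $i\in[n]$ is included in $S_t$ independently with probability $p_i$, independently of all past randomness. $\mathrm{prox}_{\eta r}(y)=\arg\min_x\{\frac1{2\eta}\|x-y\|^2+r(x)\}$ (nonempty). $\hat\partial F$ is the Fréchet subdifferential, $\hat\partial F(x)=\{v:\liminf_{\bar x\to x}\frac{F(\bar x)-F(x)-v^\top(\bar x-x)}{\|\bar x-x\|}\ge0\}$, $\mathrm{dist}(0,A)=\inf_{v\in A}\|v\|$. *)

theory Defs
  imports "HOL-Probability.Probability"
begin

definition prox :: "real \<Rightarrow> ('a::real_normed_vector \<Rightarrow> real) \<Rightarrow> 'a \<Rightarrow> 'a set" where
  "prox \<eta> r y = {x. \<forall>z. (1 / (2*\<eta>)) * (norm (x - y))^2 + r x \<le> (1 / (2*\<eta>)) * (norm (z - y))^2 + r z}"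

definition frechet_subdiff :: "('a::real_inner \<Rightarrow> real) \<Rightarrow> 'a \<Rightarrow> 'a set" where
  "frechet_subdiff F x = {v. Liminf (at x) (\<lambda>y. ereal ((F y - F x - inner v (y - x)) / norm (y - x))) \<ge> 0}"

text \<open>Distance from the origin to a set, valued in ennreal (infinite for the empty set).\<close>
definition dist0 :: "'a::real_normed_vector set \<Rightarrow> ennreal" where
  "dist0 A = (INF v\<in>A. ennreal (norm v))"

end

(* Each ProxSGD step x' in prox_{eta r}(x - eta g) makes
     v = grad f(x') - (x' - x + eta g) / eta
   a Frechet subgradient of F = f + r at x', by optimality of x' in the prox problem. Comparing the
   prox objective at x' with its value at x and using the L-smoothness of f bounds |v|^2 by
   alpha |g - grad f(x)|^2 + beta (F x - F x'); summed along the iteration, the second term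
   telescopes to beta (F x_1 - F x* ). With independent sampling the estimator error is
     g_t - grad f(x_t) = sum_i (1{i in S_t} / p_i - 1) grad f_i(x_t) / n,
   whose weights are centred, independent of each other and of x_t, so its second moment is
   sum_i (1/p_i - 1) |grad f_i(x_t)|^2 / n^2 <= sum_i (1/p_i - 1) G_i^2 / n^2; for the given p_i
   this is at most (sum_{i<=k} G_i)^2 / (n^2 (b+k-n)). Finally alpha <= C1 and beta <= C2. *)

theory Submission
  imports Defs
begin

section \<open>Proximal gradient steps\<close>

lemma lipschitz_gradient_quadratic_upper_bound:
  fixes \<phi> :: "'a::real_inner \<Rightarrow> real"
  assumes \<phi>_deriv: "\<And>y. (\<phi> has_derivative (\<lambda>h. inner (\<gamma> y) h)) (at y)"
    and \<gamma>_lipschitz: "\<And>y z. norm (\<gamma> y - \<gamma> z) \<le> K * norm (y - z)"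
  shows "\<phi> y \<le> \<phi> x + inner (\<gamma> x) (y - x) + K / 2 * (norm (y - x))\<^sup>2"
proof -
  define h where "h = y - x"
  define \<psi> where "\<psi> \<tau> = \<phi> (x + \<tau> *\<^sub>R h) - \<tau> * inner (\<gamma> x) h - K / 2 * \<tau>\<^sup>2 * (norm h)\<^sup>2" for \<tau>
  have \<psi>_deriv: "(\<psi> has_real_derivative
      inner (\<gamma> (x + \<tau> *\<^sub>R h)) h - inner (\<gamma> x) h - K * \<tau> * (norm h)\<^sup>2) (at \<tau>)" for \<tau>
  proof -
    have "((\<lambda>\<tau>. x + \<tau> *\<^sub>R h) has_derivative (\<lambda>u. u *\<^sub>R h)) (at \<tau>)"
      by (auto intro!: derivative_eq_intros)
    from has_derivative_compose[OF this \<phi>_deriv]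
    have "((\<lambda>\<tau>. \<phi> (x + \<tau> *\<^sub>R h)) has_real_derivative inner (\<gamma> (x + \<tau> *\<^sub>R h)) h) (at \<tau>)"
      by (simp add: has_real_derivative_iff_has_vector_derivative has_vector_derivative_def)
    then show ?thesis
      unfolding \<psi>_def by (auto intro!: derivative_eq_intros)
  qed
  have "\<psi> 1 \<le> \<psi> 0"
  proof (rule DERIV_nonpos_imp_nonincreasing[of 0 1])
    fix \<tau> :: real assume \<tau>: "0 \<le> \<tau>" "\<tau> \<le> 1"
    have "inner (\<gamma> (x + \<tau> *\<^sub>R h)) h - inner (\<gamma> x) h \<le> norm (\<gamma> (x + \<tau> *\<^sub>R h) - \<gamma> x) * norm h"
      by (metis inner_diff_left norm_cauchy_schwarz)
    also have "\<dots> \<le> K * norm (\<tau> *\<^sub>R h) * norm h"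
      using \<gamma>_lipschitz[of "x + \<tau> *\<^sub>R h" x] by (intro mult_right_mono) auto
    also have "\<dots> = K * \<tau> * (norm h)\<^sup>2"
      using \<tau> by (simp add: power2_eq_square)
    finally show "\<exists>y. (\<psi> has_real_derivative y) (at \<tau>) \<and> y \<le> 0"
      using \<psi>_deriv by (intro exI[of _ "inner (\<gamma> (x + \<tau> *\<^sub>R h)) h - inner (\<gamma> x) h - K * \<tau> * (norm h)\<^sup>2"]) auto
  qed simp
  then show ?thesis
    unfolding \<psi>_def h_def by simp
qed

lemma frechet_subdiff_add_proximal_subgradient:
  fixes \<phi> r :: "'a::real_inner \<Rightarrow> real"
  assumes \<phi>_deriv: "(\<phi> has_derivative (\<lambda>h. inner \<gamma> h)) (at x)"
    and proximal: "\<And>y. r x + inner u (y - x) - c * (norm (y - x))\<^sup>2 \<le> r y"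
  shows "\<gamma> + u \<in> frechet_subdiff (\<lambda>y. \<phi> y + r y) x"
proof -
  define R where "R y = (\<phi> y - \<phi> x - inner \<gamma> (y - x)) / norm (y - x) - c * norm (y - x)" for y
  have "((\<lambda>y. (\<phi> y - \<phi> x - inner \<gamma> (y - x)) / norm (y - x)) \<longlongrightarrow> 0) (at x)"
    using \<phi>_deriv by (simp add: has_derivative_at_within divide_inverse_commute)
  moreover have "((\<lambda>y. c * norm (y - x)) \<longlongrightarrow> 0) (at x)"
    by (auto intro!: tendsto_eq_intros)
  ultimately have R_lim: "(R \<longlongrightarrow> 0) (at x)"
    unfolding R_def by (metis (no_types) diff_zero tendsto_diff)
  have R_le: "R y \<le> (\<phi> y + r y - (\<phi> x + r x) - inner (\<gamma> + u) (y - x)) / norm (y - x)"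
    if "y \<noteq> x" for y
  proof -
    have "R y = (\<phi> y - \<phi> x - inner \<gamma> (y - x) - c * (norm (y - x))\<^sup>2) / norm (y - x)"
      using that by (simp add: R_def field_simps power2_eq_square)
    also have "\<dots> \<le> (\<phi> y + r y - (\<phi> x + r x) - inner (\<gamma> + u) (y - x)) / norm (y - x)"
      using proximal[of y] by (intro divide_right_mono) (auto simp: inner_add_left)
    finally show ?thesis .
  qed
  show ?thesis
    unfolding frechet_subdiff_def mem_Collect_eq le_Liminf_iff
  proof (intro allI impI)
    fix a :: ereal assume "a < 0"
    then have "\<forall>\<^sub>F y in at x. a < ereal (R y)"
      using R_lim by (cases a) (auto simp: order_tendsto_iff)
    moreover have "\<forall>\<^sub>F y in at x. y \<noteq> x"
      by (simp add: eventually_at_filter)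
    ultimately show "\<forall>\<^sub>F y in at x.
        a < ereal ((\<phi> y + r y - (\<phi> x + r x) - inner (\<gamma> + u) (y - x)) / norm (y - x))"
      by eventually_elim (use R_le in \<open>auto intro: order_less_le_trans\<close>)
  qed
qed

lemma prox_proximal_subgradient:
  fixes r :: "'a::real_inner \<Rightarrow> real"
  assumes prox: "x \<in> prox \<eta> r w" and \<eta>: "0 < \<eta>"
  shows "r x + inner (- (1 / \<eta>) *\<^sub>R (x - w)) (y - x) - 1 / (2 * \<eta>) * (norm (y - x))\<^sup>2 \<le> r y"
proof -
  have "1 / (2 * \<eta>) * (norm (x - w))\<^sup>2 + r x \<le> 1 / (2 * \<eta>) * (norm (y - w))\<^sup>2 + r y"
    using prox unfolding prox_def by blast
  also have "(norm (y - w))\<^sup>2 = (norm (y - x))\<^sup>2 + 2 * inner (y - x) (x - w) + (norm (x - w))\<^sup>2"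
    using dot_norm[of "y - x" "x - w"] by simp
  also have "1 / (2 * \<eta>) * ((norm (y - x))\<^sup>2 + 2 * inner (y - x) (x - w) + (norm (x - w))\<^sup>2)
      = 1 / (2 * \<eta>) * (norm (y - x))\<^sup>2 + inner (y - x) (x - w) / \<eta> + 1 / (2 * \<eta>) * (norm (x - w))\<^sup>2"
    using \<eta> by (simp add: field_simps)
  finally have "r x \<le> r y + 1 / (2 * \<eta>) * (norm (y - x))\<^sup>2 + inner (y - x) (x - w) / \<eta>"
    by linarith
  moreover have "inner (- (1 / \<eta>) *\<^sub>R (x - w)) (y - x) = - (inner (y - x) (x - w) / \<eta>)"
    by (simp add: inner_commute)
  ultimately show ?thesis
    by linarith
qed

definition prox_residual :: "('a \<Rightarrow> 'a) \<Rightarrow> real \<Rightarrow> 'a \<Rightarrow> 'a \<Rightarrow> 'a \<Rightarrow> 'a::real_normed_vector" where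
  "prox_residual \<gamma> \<eta> x g x' = \<gamma> x' - (1 / \<eta>) *\<^sub>R (x' - (x - \<eta> *\<^sub>R g))"

lemma prox_residual_in_frechet_subdiff:
  fixes \<phi> r :: "'a::real_inner \<Rightarrow> real"
  assumes \<phi>_deriv: "(\<phi> has_derivative (\<lambda>h. inner (\<gamma> x') h)) (at x')"
    and step: "x' \<in> prox \<eta> r (x - \<eta> *\<^sub>R g)" and \<eta>: "0 < \<eta>"
  shows "prox_residual \<gamma> \<eta> x g x' \<in> frechet_subdiff (\<lambda>y. \<phi> y + r y) x'"
  using frechet_subdiff_add_proximal_subgradient[OF \<phi>_deriv prox_proximal_subgradient[OF step \<eta>]]
  by (simp add: prox_residual_def)

lemma dist0_frechet_subdiff_le_prox_residual:
  fixes \<phi> r :: "'a::real_inner \<Rightarrow> real"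
  assumes \<phi>_deriv: "(\<phi> has_derivative (\<lambda>h. inner (\<gamma> x') h)) (at x')"
    and step: "x' \<in> prox \<eta> r (x - \<eta> *\<^sub>R g)" and \<eta>: "0 < \<eta>"
  shows "(dist0 (frechet_subdiff (\<lambda>y. \<phi> y + r y) x'))\<^sup>2 \<le> ennreal ((norm (prox_residual \<gamma> \<eta> x g x'))\<^sup>2)"
proof -
  have "dist0 (frechet_subdiff (\<lambda>y. \<phi> y + r y) x') \<le> ennreal (norm (prox_residual \<gamma> \<eta> x g x'))"
    unfolding dist0_def by (rule INF_lower[OF prox_residual_in_frechet_subdiff[where \<gamma>=\<gamma>, OF \<phi>_deriv step \<eta>]])
  then show ?thesis
    by (simp add: ennreal_power[symmetric] power_mono)
qed

lemma prox_gradient_step_decrease: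
  fixes \<phi> r :: "'a::real_inner \<Rightarrow> real"
  assumes \<phi>_deriv: "\<And>y. (\<phi> has_derivative (\<lambda>h. inner (\<gamma> y) h)) (at y)"
    and \<gamma>_lipschitz: "\<And>y z. norm (\<gamma> y - \<gamma> z) \<le> K * norm (y - z)"
    and step: "x' \<in> prox \<eta> r (x - \<eta> *\<^sub>R g)" and \<eta>: "0 < \<eta>"
  shows "inner (x' - x) (g - \<gamma> x) + (1 / (2 * \<eta>) - K / 2) * (norm (x' - x))\<^sup>2
    \<le> (\<phi> x + r x) - (\<phi> x' + r x')"
proof -
  define d where "d = x' - x"
  have "inner (- (1 / \<eta>) *\<^sub>R (x' - (x - \<eta> *\<^sub>R g))) (x - x') = (norm d)\<^sup>2 / \<eta> + inner d g"
  proof -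
    have "x' - (x - \<eta> *\<^sub>R g) = d + \<eta> *\<^sub>R g" "x - x' = - d"
      by (simp_all add: d_def)
    then have "inner (- (1 / \<eta>) *\<^sub>R (x' - (x - \<eta> *\<^sub>R g))) (x - x')
        = (1 / \<eta>) * inner (d + \<eta> *\<^sub>R g) d"
      by (simp only:) simp
    then show ?thesis
      using \<eta> by (simp add: inner_add_right inner_commute power2_norm_eq_inner field_simps)
  qed
  then have "r x' + inner d g + (norm d)\<^sup>2 / (2 * \<eta>) \<le> r x"
    using prox_proximal_subgradient[OF step \<eta>, of x] \<eta> by (simp add: d_def norm_minus_commute)
  moreover have "\<phi> x' \<le> \<phi> x + inner (\<gamma> x) d + K / 2 * (norm d)\<^sup>2"
    unfolding d_def by (rule lipschitz_gradient_quadratic_upper_bound[OF \<phi>_deriv \<gamma>_lipschitz])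
  ultimately show ?thesis
    by (simp add: d_def[symmetric] inner_diff_right inner_commute algebra_simps)
qed

text \<open>The constants of the one-step bound; they are sharper than C1 and C2 of the statement.\<close>

definition prox_sgd_noise_coeff :: "real \<Rightarrow> real \<Rightarrow> real" where
  "prox_sgd_noise_coeff L \<eta> = (1 + L * \<eta>) * (3 - 2 * L * \<eta>) / (1 - 2 * L * \<eta>)"

definition prox_sgd_gap_coeff :: "real \<Rightarrow> real \<Rightarrow> real" where
  "prox_sgd_gap_coeff L \<eta> = 2 * (1 + L * \<eta>) / (\<eta> * (1 - 2 * L * \<eta>))"

lemma two_mult_le_weighted_squares:
  fixes a b e :: real
  assumes "0 < e"
  shows "2 * a * b \<le> e * a\<^sup>2 + b\<^sup>2 / e"
proof -
  have "0 \<le> (e * a - b)\<^sup>2 / e"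
    using assms by simp
  also have "\<dots> = e * a\<^sup>2 + b\<^sup>2 / e - 2 * a * b"
    using assms by (simp add: field_simps power2_eq_square)
  finally show ?thesis
    by simp
qed

text \<open>The one-step bound in scalar form: V = |residual|, N = |x' - x|, E = |g - grad f x|,
  U = |(g - grad f x) + (x' - x) / eta|, P = <x' - x, g - grad f x> and D = F x - F x'.\<close>

lemma prox_sgd_scalar_bound:
  fixes L \<eta> V N E U P D :: real
  assumes L: "0 < L" and \<eta>: "0 < \<eta>" "L * \<eta> < 1 / 2"
    and V: "0 \<le> V" "V \<le> L * N + U"
    and U_sq: "U\<^sup>2 = E\<^sup>2 + 2 / \<eta> * P + N\<^sup>2 / \<eta>\<^sup>2"
    and P: "- (N * E) \<le> P"
    and decrease: "P + (1 / (2 * \<eta>) - L / 2) * N\<^sup>2 \<le> D"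
  shows "V\<^sup>2 \<le> prox_sgd_noise_coeff L \<eta> * E\<^sup>2 + prox_sgd_gap_coeff L \<eta> * D"
proof -
  define s where "s = L * \<eta>"
  define q where "q = 1 - 2 * s"
  have s: "0 < s" "0 < q"
    using L \<eta> by (auto simp: s_def q_def)
  have L_eq: "L = s / \<eta>"
    using \<eta> by (simp add: s_def)
  have "2 * U * (L * N) \<le> s * U\<^sup>2 + (L * N)\<^sup>2 / s"
    by (rule two_mult_le_weighted_squares[OF s(1)])
  moreover have "V\<^sup>2 \<le> (L * N + U)\<^sup>2"
    using V by (intro power_mono) auto
  moreover have "(L * N)\<^sup>2 / s + (L * N)\<^sup>2 = (1 + s) * L / \<eta> * N\<^sup>2"
    using L \<eta> by (simp add: s_def field_simps power2_eq_square)
  ultimately have V_sq: "V\<^sup>2 \<le> (1 + s) * U\<^sup>2 + (1 + s) * L / \<eta> * N\<^sup>2"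
    by (simp add: power2_sum algebra_simps)
  have "2 / \<eta> * P \<le> 2 / \<eta> * (D - (1 / (2 * \<eta>) - L / 2) * N\<^sup>2)"
    using decrease \<eta> by (intro mult_left_mono) auto
  also have "\<dots> = 2 / \<eta> * D - N\<^sup>2 / \<eta>\<^sup>2 + L / \<eta> * N\<^sup>2"
    using \<eta> by (simp add: field_simps power2_eq_square)
  finally have U_bound: "U\<^sup>2 \<le> E\<^sup>2 + 2 / \<eta> * D + L / \<eta> * N\<^sup>2"
    unfolding U_sq by linarith
  have "2 * N * E \<le> L * N\<^sup>2 + E\<^sup>2 / L"
    using L by (rule two_mult_le_weighted_squares)
  then have "- (E\<^sup>2 / (2 * L)) - L * N\<^sup>2 / 2 \<le> P"
    using P by (simp add: field_simps)
  then have "(1 / (2 * \<eta>) - L) * N\<^sup>2 \<le> D + E\<^sup>2 / (2 * L)"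
    using decrease by (simp add: algebra_simps)
  then have N_bound: "N\<^sup>2 \<le> (2 * \<eta> * D + \<eta> / L * E\<^sup>2) / q"
    using s \<eta> L by (simp add: s_def q_def field_simps)
  have "V\<^sup>2 \<le> (1 + s) * (E\<^sup>2 + 2 / \<eta> * D + L / \<eta> * N\<^sup>2) + (1 + s) * L / \<eta> * N\<^sup>2"
    using V_sq U_bound s by (smt (verit) mult_left_mono)
  also have "\<dots> = (1 + s) * (E\<^sup>2 + 2 / \<eta> * D) + 2 * (1 + s) * L / \<eta> * N\<^sup>2"
    by (simp add: algebra_simps)
  also have "\<dots> \<le> (1 + s) * (E\<^sup>2 + 2 / \<eta> * D)
      + 2 * (1 + s) * L / \<eta> * ((2 * \<eta> * D + \<eta> / L * E\<^sup>2) / q)"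
    using N_bound s L \<eta> by (intro add_left_mono mult_left_mono) auto
  also have "\<dots> = (1 + s) * (3 - 2 * s) / q * E\<^sup>2 + 2 * (1 + s) / (\<eta> * q) * D"
    using s \<eta> unfolding L_eq by (simp add: field_simps) (simp add: q_def algebra_simps)
  also have "\<dots> = prox_sgd_noise_coeff L \<eta> * E\<^sup>2 + prox_sgd_gap_coeff L \<eta> * D"
    by (simp add: prox_sgd_noise_coeff_def prox_sgd_gap_coeff_def q_def s_def mult.assoc)
  finally show ?thesis .
qed

lemma prox_sgd_coeffs_nonneg:
  assumes "0 < L" "0 < \<eta>" "L * \<eta> < 1 / 2"
  shows "0 \<le> prox_sgd_noise_coeff L \<eta>" "0 \<le> prox_sgd_gap_coeff L \<eta>"
  using assms by (auto simp: prox_sgd_noise_coeff_def prox_sgd_gap_coeff_def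
      intro!: divide_nonneg_pos mult_nonneg_nonneg mult_pos_pos)

lemma prox_sgd_noise_coeff_le:
  assumes L: "0 < L" and \<eta>: "0 < \<eta>" "L * \<eta> < 1 / 2"
  shows "prox_sgd_noise_coeff L \<eta> \<le> (1 + 4*L*\<eta> - 2*L^2*\<eta>^2) / (L*\<eta> - 2*L^2*\<eta>^2)"
proof -
  define s where "s = L * \<eta>"
  have s: "0 < s" "s < 1 / 2"
    using L \<eta> by (auto simp: s_def)
  have "s * s < 1 / 2 * (1 / 2)"
    by (rule mult_strict_mono) (use s in auto)
  then have "s\<^sup>2 < 1 / 4"
    by (simp add: power2_eq_square)
  moreover have "0 \<le> s ^ 3"
    using s by simp
  moreover have "s * ((1 + s) * (3 - 2 * s)) = 3 * s + s\<^sup>2 - 2 * s ^ 3"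
    by (simp add: algebra_simps power2_eq_square power3_eq_cube)
  ultimately have calculation_bound: "s * ((1 + s) * (3 - 2 * s)) \<le> 1 + 4 * s - 2 * s\<^sup>2"
    using s by linarith
  have "prox_sgd_noise_coeff L \<eta> = s * ((1 + s) * (3 - 2 * s)) / (s * (1 - 2 * s))"
    using L \<eta> by (simp add: prox_sgd_noise_coeff_def s_def mult.assoc)
  also have "\<dots> \<le> (1 + 4 * s - 2 * s\<^sup>2) / (s * (1 - 2 * s))"
    using calculation_bound s by (intro divide_right_mono) auto
  also have "\<dots> = (1 + 4*L*\<eta> - 2*L^2*\<eta>^2) / (L*\<eta> - 2*L^2*\<eta>^2)"
    by (simp add: s_def power2_eq_square algebra_simps)
  finally show ?thesis .
qed

lemma prox_sgd_gap_coeff_le: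
  assumes L: "0 < L" and \<eta>: "0 < \<eta>" "L * \<eta> < 1 / 2"
  shows "prox_sgd_gap_coeff L \<eta> \<le> (2 + 4*L*\<eta> + 4*L^2*\<eta>^2) / (\<eta> - 2*L*\<eta>^2)"
proof -
  have "2 * (1 + L * \<eta>) / (\<eta> * (1 - 2 * L * \<eta>)) \<le> (2 + 4*L*\<eta> + 4*L^2*\<eta>^2) / (\<eta> * (1 - 2 * L * \<eta>))"
    using L \<eta> by (intro divide_right_mono) auto
  then show ?thesis
    by (simp add: prox_sgd_gap_coeff_def power2_eq_square algebra_simps)
qed

lemma prox_residual_norm_bound:
  fixes \<phi> r :: "'a::real_inner \<Rightarrow> real"
  assumes \<phi>_deriv: "\<And>y. (\<phi> has_derivative (\<lambda>h. inner (\<gamma> y) h)) (at y)"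
    and \<gamma>_lipschitz: "\<And>y z. norm (\<gamma> y - \<gamma> z) \<le> L * norm (y - z)"
    and L: "0 < L" and \<eta>: "0 < \<eta>" "L * \<eta> < 1 / 2"
    and step: "x' \<in> prox \<eta> r (x - \<eta> *\<^sub>R g)"
  shows "(norm (prox_residual \<gamma> \<eta> x g x'))\<^sup>2
    \<le> prox_sgd_noise_coeff L \<eta> * (norm (g - \<gamma> x))\<^sup>2
      + prox_sgd_gap_coeff L \<eta> * ((\<phi> x + r x) - (\<phi> x' + r x'))"
proof -
  define d e where "d = x' - x" and "e = g - \<gamma> x"
  have "prox_residual \<gamma> \<eta> x g x' = (\<gamma> x' - \<gamma> x) - (e + (1 / \<eta>) *\<^sub>R d)"
    using \<eta> by (simp add: prox_residual_def d_def e_def algebra_simps)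
  then have V: "norm (prox_residual \<gamma> \<eta> x g x') \<le> L * norm d + norm (e + (1 / \<eta>) *\<^sub>R d)"
    using norm_triangle_ineq4[of "\<gamma> x' - \<gamma> x" "e + (1 / \<eta>) *\<^sub>R d"] \<gamma>_lipschitz[of x' x]
    by (simp add: d_def)
  have U_sq: "(norm (e + (1 / \<eta>) *\<^sub>R d))\<^sup>2 = (norm e)\<^sup>2 + 2 / \<eta> * inner d e + (norm d)\<^sup>2 / \<eta>\<^sup>2"
    using \<eta> unfolding power2_norm_eq_inner
    by (simp add: inner_add_left inner_add_right inner_commute field_simps power2_eq_square)
  have P: "- (norm d * norm e) \<le> inner d e"
    using Cauchy_Schwarz_ineq2[of d e] by linarith
  have decrease: "inner d e + (1 / (2 * \<eta>) - L / 2) * (norm d)\<^sup>2 \<le> (\<phi> x + r x) - (\<phi> x' + r x')"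
    unfolding d_def e_def by (rule prox_gradient_step_decrease[OF \<phi>_deriv \<gamma>_lipschitz step \<eta>(1)])
  show ?thesis
    using prox_sgd_scalar_bound[OF L \<eta> norm_ge_zero V U_sq P decrease]
    by (simp add: e_def)
qed

lemma prox_gradient_trajectory_bound:
  fixes \<phi> r :: "'a::real_inner \<Rightarrow> real" and x g :: "nat \<Rightarrow> 'a"
  assumes \<phi>_deriv: "\<And>y. (\<phi> has_derivative (\<lambda>h. inner (\<gamma> y) h)) (at y)"
    and \<gamma>_lipschitz: "\<And>y z. norm (\<gamma> y - \<gamma> z) \<le> L * norm (y - z)"
    and L: "0 < L" and \<eta>: "0 < \<eta>" "L * \<eta> < 1 / 2"
    and step: "\<And>t. t \<in> {1..T} \<Longrightarrow> x (Suc t) \<in> prox \<eta> r (x t - \<eta> *\<^sub>R g t)"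
    and lower: "\<And>y. m \<le> \<phi> y + r y"
  shows "(\<Sum>t=1..T. (norm (prox_residual \<gamma> \<eta> (x t) (g t) (x (Suc t))))\<^sup>2)
    \<le> prox_sgd_noise_coeff L \<eta> * (\<Sum>t=1..T. (norm (g t - \<gamma> (x t)))\<^sup>2)
      + prox_sgd_gap_coeff L \<eta> * (\<phi> (x 1) + r (x 1) - m)"
proof -
  define F where "F y = \<phi> y + r y" for y
  let ?\<alpha> = "prox_sgd_noise_coeff L \<eta>" and ?\<beta> = "prox_sgd_gap_coeff L \<eta>"
  have "(\<Sum>t=1..T. (norm (prox_residual \<gamma> \<eta> (x t) (g t) (x (Suc t))))\<^sup>2)
      \<le> (\<Sum>t=1..T. ?\<alpha> * (norm (g t - \<gamma> (x t)))\<^sup>2 + ?\<beta> * (F (x t) - F (x (Suc t))))"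
    unfolding F_def
    by (intro sum_mono prox_residual_norm_bound[OF \<phi>_deriv \<gamma>_lipschitz L \<eta>] step)
  also have "\<dots> = ?\<alpha> * (\<Sum>t=1..T. (norm (g t - \<gamma> (x t)))\<^sup>2) + ?\<beta> * (F (x 1) - F (x (Suc T)))"
    using sum_Suc_diff[of 1 T "\<lambda>t. - F (x t)"]
    by (simp add: sum.distrib sum_distrib_left[symmetric])
  also have "\<dots> \<le> ?\<alpha> * (\<Sum>t=1..T. (norm (g t - \<gamma> (x t)))\<^sup>2) + ?\<beta> * (F (x 1) - m)"
    using lower[of "x (Suc T)"] prox_sgd_coeffs_nonneg[OF L \<eta>]
    by (intro add_left_mono mult_left_mono) (auto simp: F_def)
  finally show ?thesis
    by (simp add: F_def)
qed

section \<open>Independent sampling\<close>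

lemma (in prob_space) integral_if_event:
  assumes P: "P \<in> measurable M (count_space UNIV)"
  shows "(\<integral>\<omega>. (if P \<omega> then a else b) \<partial>M)
    = a * prob {\<omega> \<in> space M. P \<omega>} + b * (1 - prob {\<omega> \<in> space M. P \<omega>})"
proof -
  define A where "A = {\<omega> \<in> space M. P \<omega>}"
  have "P -` {True} \<inter> space M \<in> events"
    using P by (intro measurable_sets) auto
  then have A: "A \<in> events"
    by (simp add: A_def vimage_def Int_def conj_commute)
  have "(\<integral>\<omega>. (if P \<omega> then a else b) \<partial>M) = (\<integral>\<omega>. b + (a - b) * indicator A \<omega> \<partial>M)"
    by (intro Bochner_Integration.integral_cong) (auto simp: A_def indicator_def)
  also have "\<dots> = b + (a - b) * prob A"
    using A by (subst Bochner_Integration.integral_add) (auto simp: prob_space emeasure_eq_measure)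
  finally show ?thesis
    by (simp add: A_def algebra_simps)
qed

definition sampling_noise :: "real \<Rightarrow> bool \<Rightarrow> real" where
  "sampling_noise p b = (if b then 1 / p else 0) - 1"

lemma abs_sampling_noise_le: "0 < p \<Longrightarrow> \<bar>sampling_noise p b\<bar> \<le> 1 / p + 1"
  by (simp add: sampling_noise_def abs_le_iff)

lemma sum_sampled_minus_sum:
  fixes v :: "'i \<Rightarrow> 'b::real_vector"
  assumes "finite I"
  shows "(\<Sum>i\<in>{i\<in>I. P i}. (1 / p i) *\<^sub>R v i) - (\<Sum>i\<in>I. v i)
    = (\<Sum>i\<in>I. sampling_noise (p i) (P i) *\<^sub>R v i)"
proof -
  have "(if P i then (1 / p i) *\<^sub>R v i else 0) = (if P i then 1 / p i else 0) *\<^sub>R v i" for i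
    by simp
  then show ?thesis
    using assms by (simp add: sum.inter_filter sampling_noise_def scaleR_diff_left sum_subtractf)
qed

lemma norm_sum_scaleR_squared:
  fixes v :: "'i \<Rightarrow> 'b::real_inner"
  shows "(norm (\<Sum>i\<in>I. c i *\<^sub>R v i))\<^sup>2 = (\<Sum>i\<in>I. \<Sum>j\<in>I. c i * c j * inner (v i) (v j))"
  unfolding power2_norm_eq_inner inner_sum_left
  by (simp only: inner_sum_right) (simp add: mult_ac)

lemma (in prob_space) sampling_noise_moments:
  assumes indep: "indep_vars (\<lambda>_. count_space UNIV) \<xi> I"
    and prob: "\<And>i. i \<in> I \<Longrightarrow> prob {\<omega> \<in> space M. \<xi> i \<omega>} = p i"
    and pos: "\<And>i. i \<in> I \<Longrightarrow> 0 < p i"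
    and ij: "i \<in> I" "j \<in> I"
  shows "(\<integral>\<omega>. sampling_noise (p i) (\<xi> i \<omega>) * sampling_noise (p j) (\<xi> j \<omega>) \<partial>M)
    = (if i = j then 1 / p i - 1 else 0)"
proof -
  define z where "z l \<omega> = sampling_noise (p l) (\<xi> l \<omega>)" for l \<omega>
  have \<xi>_meas: "\<xi> l \<in> measurable M (count_space UNIV)" if "l \<in> I" for l
    using indep that by (auto simp: indep_vars_def)
  have z_indep: "indep_vars (\<lambda>_. borel) z I"
    unfolding z_def by (rule indep_vars_compose2[OF indep]) simp
  have z_integrable: "integrable M (z l)" if "l \<in> I" for l
  proof (rule integrable_const_bound[where B="1 / p l + 1"])
    show "z l \<in> borel_measurable M"
      using measurable_compose[OF \<xi>_meas[OF that], of "sampling_noise (p l)" borel]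
      by (simp add: z_def[abs_def])
  qed (use abs_sampling_noise_le[OF pos[OF that]] in \<open>simp add: z_def\<close>)
  have z_mean: "(\<integral>\<omega>. z l \<omega> \<partial>M) = 0" if "l \<in> I" for l
    using pos[OF that]
    by (simp add: z_def sampling_noise_def if_distrib[of "\<lambda>a. a - 1"] integral_if_event[OF \<xi>_meas[OF that]]
        prob[OF that] field_simps)
  show ?thesis
  proof (cases "i = j")
    case True
    have "(\<integral>\<omega>. z i \<omega> * z i \<omega> \<partial>M) = (\<integral>\<omega>. (if \<xi> i \<omega> then (1 / p i - 1) * (1 / p i - 1) else 1) \<partial>M)"
      by (intro Bochner_Integration.integral_cong) (auto simp: z_def sampling_noise_def)
    also have "\<dots> = 1 / p i - 1"
      using pos[OF ij(1)]
      by (simp add: integral_if_event[OF \<xi>_meas[OF ij(1)]] prob[OF ij(1)] field_simps)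
    finally show ?thesis
      using True by (simp add: z_def)
  next
    case False
    have "(\<integral>\<omega>. (\<Prod>l\<in>{i, j}. z l \<omega>) \<partial>M) = (\<Prod>l\<in>{i, j}. \<integral>\<omega>. z l \<omega> \<partial>M)"
      using ij z_integrable by (intro indep_vars_lebesgue_integral indep_vars_subset[OF z_indep]) auto
    then show ?thesis
      using False ij z_mean by (simp add: z_def)
  qed
qed

lemma sets_vimage_algebra_compose_subset:
  assumes A: "A \<in> X \<rightarrow> space MA" and f: "f \<in> measurable MA N"
  shows "sets (vimage_algebra X (\<lambda>x. f (A x)) N) \<subseteq> sets (vimage_algebra X A MA)"
proof -
  have "(\<lambda>x. f (A x)) \<in> measurable (vimage_algebra X A MA) N"
    using measurable_vimage_algebra1[OF A] f by (rule measurable_compose)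
  then show ?thesis
    by (simp add: measurable_iff_sets)
qed

lemma (in prob_space) indep_set_vimage_algebra_compose:
  assumes indep: "indep_set (sets (vimage_algebra (space M) A MA)) (sets (vimage_algebra (space M) B MB))"
    and A: "A \<in> measurable M MA" and B: "B \<in> measurable M MB"
    and f: "f \<in> measurable MA NA" and g: "g \<in> measurable MB NB"
  shows "indep_set (sets (vimage_algebra (space M) (\<lambda>\<omega>. f (A \<omega>)) NA))
    (sets (vimage_algebra (space M) (\<lambda>\<omega>. g (B \<omega>)) NB))"
proof -
  have "sets (vimage_algebra (space M) (\<lambda>\<omega>. f (A \<omega>)) NA) \<subseteq> sets (vimage_algebra (space M) A MA)"
    using measurable_space[OF A] f by (intro sets_vimage_algebra_compose_subset) auto
  moreover have "sets (vimage_algebra (space M) (\<lambda>\<omega>. g (B \<omega>)) NB) \<subseteq> sets (vimage_algebra (space M) B MB)"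
    using measurable_space[OF B] g by (intro sets_vimage_algebra_compose_subset) auto
  ultimately show ?thesis
    using indep unfolding indep_set_def
    by (elim indep_sets_mono_sets) (auto split: bool.split)
qed

lemma (in prob_space) integral_mult_indep_bounded:
  fixes f :: "'u \<Rightarrow> real" and g :: "'v \<Rightarrow> real"
  assumes indep: "indep_set (sets (vimage_algebra (space M) U MU)) (sets (vimage_algebra (space M) V MV))"
    and U: "U \<in> measurable M MU" and V: "V \<in> measurable M MV"
    and f: "f \<in> borel_measurable MU" and g: "g \<in> borel_measurable MV"
    and f_bound: "\<And>u. \<bar>f u\<bar> \<le> c" and g_bound: "\<And>v. \<bar>g v\<bar> \<le> d"
  shows "integrable M (\<lambda>\<omega>. f (U \<omega>) * g (V \<omega>))"
    and "(\<integral>\<omega>. f (U \<omega>) * g (V \<omega>) \<partial>M) = (\<integral>\<omega>. f (U \<omega>) \<partial>M) * (\<integral>\<omega>. g (V \<omega>) \<partial>M)"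
proof -
  have fU: "(\<lambda>\<omega>. f (U \<omega>)) \<in> borel_measurable M" and gV: "(\<lambda>\<omega>. g (V \<omega>)) \<in> borel_measurable M"
    using measurable_compose[OF U f] measurable_compose[OF V g] .
  have "indep_var borel (\<lambda>\<omega>. f (U \<omega>)) borel (\<lambda>\<omega>. g (V \<omega>))"
    using indep_set_vimage_algebra_compose[OF indep U V f g] fU gV
    by (simp add: indep_var_eq sets_vimage_algebra)
  moreover have "integrable M (\<lambda>\<omega>. f (U \<omega>))" "integrable M (\<lambda>\<omega>. g (V \<omega>))"
    using f_bound g_bound fU gV by (auto intro!: integrable_const_bound AE_I2)
  ultimately show "integrable M (\<lambda>\<omega>. f (U \<omega>) * g (V \<omega>))"
    and "(\<integral>\<omega>. f (U \<omega>) * g (V \<omega>) \<partial>M) = (\<integral>\<omega>. f (U \<omega>) \<partial>M) * (\<integral>\<omega>. g (V \<omega>) \<partial>M)"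
    by (rule indep_var_integrable, rule indep_var_lebesgue_integral)
qed

lemma (in prob_space) sampling_noise_inner_indep:
  fixes \<xi> :: "'i \<Rightarrow> 'a \<Rightarrow> bool" and X :: "'a \<Rightarrow> 'v::topological_space"
    and \<gamma> :: "'i \<Rightarrow> 'v \<Rightarrow> 'b::euclidean_space"
  assumes indep: "indep_vars (\<lambda>_. count_space UNIV) \<xi> I"
    and pos: "\<And>i. i \<in> I \<Longrightarrow> 0 < p i"
    and X_meas: "X \<in> borel_measurable M"
    and indep_X: "indep_set
      (sets (vimage_algebra (space M) (\<lambda>\<omega>. \<lambda>i\<in>I. \<xi> i \<omega>) (\<Pi>\<^sub>M i\<in>I. count_space UNIV)))
      (sets (vimage_algebra (space M) X borel))"
    and \<gamma>_meas: "\<And>i. i \<in> I \<Longrightarrow> \<gamma> i \<in> borel_measurable borel"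
    and \<gamma>_bound: "\<And>i y. i \<in> I \<Longrightarrow> norm (\<gamma> i y) \<le> B i"
    and ij: "i \<in> I" "j \<in> I"
  shows "integrable M (\<lambda>\<omega>. sampling_noise (p i) (\<xi> i \<omega>) * sampling_noise (p j) (\<xi> j \<omega>)
      * inner (\<gamma> i (X \<omega>)) (\<gamma> j (X \<omega>)))"
    and "(\<integral>\<omega>. sampling_noise (p i) (\<xi> i \<omega>) * sampling_noise (p j) (\<xi> j \<omega>)
      * inner (\<gamma> i (X \<omega>)) (\<gamma> j (X \<omega>)) \<partial>M)
      = (\<integral>\<omega>. sampling_noise (p i) (\<xi> i \<omega>) * sampling_noise (p j) (\<xi> j \<omega>) \<partial>M)
        * (\<integral>\<omega>. inner (\<gamma> i (X \<omega>)) (\<gamma> j (X \<omega>)) \<partial>M)"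
proof -
  have "(\<lambda>a. sampling_noise (p l) (a l)) \<in> borel_measurable (\<Pi>\<^sub>M i\<in>I. count_space UNIV)" if "l \<in> I" for l
    using measurable_component_singleton[OF that] by (rule measurable_compose) simp
  then have "(\<lambda>a. sampling_noise (p i) (a i) * sampling_noise (p j) (a j))
      \<in> borel_measurable (\<Pi>\<^sub>M i\<in>I. count_space UNIV)"
    using ij by (intro borel_measurable_times)
  note product = integral_mult_indep_bounded[OF indep_X _ X_meas this _ _ _,
      where c="(1 / p i + 1) * (1 / p j + 1)" and d="B i * B j" and g="\<lambda>y. inner (\<gamma> i y) (\<gamma> j y)"]
  have "\<bar>sampling_noise (p i) (a i) * sampling_noise (p j) (a j)\<bar> \<le> (1 / p i + 1) * (1 / p j + 1)" for a
    using abs_sampling_noise_le pos[OF ij(1)] pos[OF ij(2)] by (auto simp: abs_mult intro!: mult_mono)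
  moreover have "\<bar>inner (\<gamma> i y) (\<gamma> j y)\<bar> \<le> B i * B j" for y
    using Cauchy_Schwarz_ineq2[of "\<gamma> i y" "\<gamma> j y"] \<gamma>_bound[OF ij(1), of y] \<gamma>_bound[OF ij(2), of y]
    by (smt (verit) mult_mono norm_ge_zero)
  moreover have "(\<lambda>\<omega>. \<lambda>i\<in>I. \<xi> i \<omega>) \<in> measurable M (\<Pi>\<^sub>M i\<in>I. count_space UNIV)"
    using indep by (auto simp: indep_vars_def intro!: measurable_restrict)
  ultimately show "integrable M (\<lambda>\<omega>. sampling_noise (p i) (\<xi> i \<omega>) * sampling_noise (p j) (\<xi> j \<omega>)
      * inner (\<gamma> i (X \<omega>)) (\<gamma> j (X \<omega>)))"
    and "(\<integral>\<omega>. sampling_noise (p i) (\<xi> i \<omega>) * sampling_noise (p j) (\<xi> j \<omega>)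
      * inner (\<gamma> i (X \<omega>)) (\<gamma> j (X \<omega>)) \<partial>M)
      = (\<integral>\<omega>. sampling_noise (p i) (\<xi> i \<omega>) * sampling_noise (p j) (\<xi> j \<omega>) \<partial>M)
        * (\<integral>\<omega>. inner (\<gamma> i (X \<omega>)) (\<gamma> j (X \<omega>)) \<partial>M)"
    using product \<gamma>_meas ij by simp_all
qed

lemma (in prob_space) independent_sampling_second_moment:
  fixes \<xi> :: "'i \<Rightarrow> 'a \<Rightarrow> bool" and X :: "'a \<Rightarrow> 'v::topological_space"
    and \<gamma> :: "'i \<Rightarrow> 'v \<Rightarrow> 'b::euclidean_space"
  assumes I: "finite I"
    and indep: "indep_vars (\<lambda>_. count_space UNIV) \<xi> I"
    and prob: "\<And>i. i \<in> I \<Longrightarrow> prob {\<omega> \<in> space M. \<xi> i \<omega>} = p i"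
    and pos: "\<And>i. i \<in> I \<Longrightarrow> 0 < p i"
    and X_meas: "X \<in> borel_measurable M"
    and indep_X: "indep_set
      (sets (vimage_algebra (space M) (\<lambda>\<omega>. \<lambda>i\<in>I. \<xi> i \<omega>) (\<Pi>\<^sub>M i\<in>I. count_space UNIV)))
      (sets (vimage_algebra (space M) X borel))"
    and \<gamma>_meas: "\<And>i. i \<in> I \<Longrightarrow> \<gamma> i \<in> borel_measurable borel"
    and \<gamma>_bound: "\<And>i y. i \<in> I \<Longrightarrow> norm (\<gamma> i y) \<le> B i"
  defines "err \<equiv> \<lambda>\<omega>. (\<Sum>i\<in>{i\<in>I. \<xi> i \<omega>}. (1 / p i) *\<^sub>R \<gamma> i (X \<omega>)) - (\<Sum>i\<in>I. \<gamma> i (X \<omega>))"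
  shows "integrable M (\<lambda>\<omega>. (norm (err \<omega>))\<^sup>2)"
    and "(\<integral>\<omega>. (norm (err \<omega>))\<^sup>2 \<partial>M) = (\<Sum>i\<in>I. (1 / p i - 1) * (\<integral>\<omega>. (norm (\<gamma> i (X \<omega>)))\<^sup>2 \<partial>M))"
proof -
  define z where "z = (\<lambda>i \<omega>. sampling_noise (p i) (\<xi> i \<omega>))"
  define w where "w = (\<lambda>i j \<omega>. inner (\<gamma> i (X \<omega>)) (\<gamma> j (X \<omega>)))"
  have expand: "(norm (err \<omega>))\<^sup>2 = (\<Sum>i\<in>I. \<Sum>j\<in>I. z i \<omega> * z j \<omega> * w i j \<omega>)" for \<omega>
    by (simp add: err_def sum_sampled_minus_sum[OF I] norm_sum_scaleR_squared z_def w_def)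
  have factor: "integrable M (\<lambda>\<omega>. z i \<omega> * z j \<omega> * w i j \<omega>)
      \<and> (\<integral>\<omega>. z i \<omega> * z j \<omega> * w i j \<omega> \<partial>M) = (\<integral>\<omega>. z i \<omega> * z j \<omega> \<partial>M) * (\<integral>\<omega>. w i j \<omega> \<partial>M)"
    if "i \<in> I" "j \<in> I" for i j
    using sampling_noise_inner_indep[where p=p and \<gamma>=\<gamma> and B=B and i=i and j=j,
        OF indep pos X_meas indep_X \<gamma>_meas \<gamma>_bound that]
    by (simp add: z_def w_def)
  show "integrable M (\<lambda>\<omega>. (norm (err \<omega>))\<^sup>2)"
    unfolding expand using factor by (intro Bochner_Integration.integrable_sum) auto
  have "(\<integral>\<omega>. (norm (err \<omega>))\<^sup>2 \<partial>M)
      = (\<Sum>i\<in>I. \<Sum>j\<in>I. (\<integral>\<omega>. z i \<omega> * z j \<omega> \<partial>M) * (\<integral>\<omega>. w i j \<omega> \<partial>M))"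
    unfolding expand using factor by (simp add: Bochner_Integration.integral_sum)
  also have "\<dots> = (\<Sum>i\<in>I. (1 / p i - 1) * (\<integral>\<omega>. w i i \<omega> \<partial>M))"
  proof (rule sum.cong[OF refl])
    fix i assume i: "i \<in> I"
    have "(\<Sum>j\<in>I. (\<integral>\<omega>. z i \<omega> * z j \<omega> \<partial>M) * (\<integral>\<omega>. w i j \<omega> \<partial>M))
        = (\<Sum>j\<in>I. if j = i then (1 / p i - 1) * (\<integral>\<omega>. w i i \<omega> \<partial>M) else 0)"
      using i by (intro sum.cong refl) (auto simp: z_def sampling_noise_moments[OF indep prob pos])
    then show "(\<Sum>j\<in>I. (\<integral>\<omega>. z i \<omega> * z j \<omega> \<partial>M) * (\<integral>\<omega>. w i j \<omega> \<partial>M))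
        = (1 / p i - 1) * (\<integral>\<omega>. w i i \<omega> \<partial>M)"
      using I i by simp
  qed
  finally show "(\<integral>\<omega>. (norm (err \<omega>))\<^sup>2 \<partial>M) = (\<Sum>i\<in>I. (1 / p i - 1) * (\<integral>\<omega>. (norm (\<gamma> i (X \<omega>)))\<^sup>2 \<partial>M))"
    by (simp add: w_def power2_norm_eq_inner)
qed

lemma (in prob_space) independent_sampling_variance:
  fixes \<xi> :: "'i \<Rightarrow> 'a \<Rightarrow> bool" and X :: "'a \<Rightarrow> 'v::topological_space"
    and \<gamma> :: "'i \<Rightarrow> 'v \<Rightarrow> 'b::euclidean_space"
  assumes I: "finite I"
    and indep: "indep_vars (\<lambda>_. count_space UNIV) \<xi> I"
    and prob: "\<And>i. i \<in> I \<Longrightarrow> prob {\<omega> \<in> space M. \<xi> i \<omega>} = p i"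
    and pos: "\<And>i. i \<in> I \<Longrightarrow> 0 < p i"
    and X_meas: "X \<in> borel_measurable M"
    and indep_X: "indep_set
      (sets (vimage_algebra (space M) (\<lambda>\<omega>. \<lambda>i\<in>I. \<xi> i \<omega>) (\<Pi>\<^sub>M i\<in>I. count_space UNIV)))
      (sets (vimage_algebra (space M) X borel))"
    and \<gamma>_meas: "\<And>i. i \<in> I \<Longrightarrow> \<gamma> i \<in> borel_measurable borel"
    and \<gamma>_bound: "\<And>i y. i \<in> I \<Longrightarrow> norm (\<gamma> i y) \<le> B i"
  shows "(\<integral>\<^sup>+\<omega>. ennreal ((norm ((\<Sum>i\<in>{i\<in>I. \<xi> i \<omega>}. (1 / p i) *\<^sub>R \<gamma> i (X \<omega>))
      - (\<Sum>i\<in>I. \<gamma> i (X \<omega>))))\<^sup>2) \<partial>M)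
    \<le> ennreal (\<Sum>i\<in>I. (1 / p i - 1) * (B i)\<^sup>2)"
proof -
  note moment = independent_sampling_second_moment[OF I indep prob pos X_meas indep_X \<gamma>_meas \<gamma>_bound]
  have "(\<Sum>i\<in>I. (1 / p i - 1) * (\<integral>\<omega>. (norm (\<gamma> i (X \<omega>)))\<^sup>2 \<partial>M)) \<le> (\<Sum>i\<in>I. (1 / p i - 1) * (B i)\<^sup>2)"
  proof (intro sum_mono mult_left_mono)
    fix i assume i: "i \<in> I"
    have "(\<integral>\<omega>. (norm (\<gamma> i (X \<omega>)))\<^sup>2 \<partial>M) \<le> (\<integral>\<omega>. (B i)\<^sup>2 \<partial>M)"
      using \<gamma>_bound[OF i] by (intro integral_mono') (auto intro: power_mono)
    then show "(\<integral>\<omega>. (norm (\<gamma> i (X \<omega>)))\<^sup>2 \<partial>M) \<le> (B i)\<^sup>2"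
      by (simp add: prob_space)
    show "0 \<le> 1 / p i - 1"
      using prob_le_1[of "{\<omega> \<in> space M. \<xi> i \<omega>}"] prob[OF i] pos[OF i] by simp
  qed
  then show ?thesis
    using moment by (simp add: nn_integral_eq_integral ennreal_leI)
qed

section \<open>Expected stationarity of ProxSGD\<close>

lemma lipschitz_bound_imp_borel_measurable:
  fixes f :: "'a::real_normed_vector \<Rightarrow> 'b::real_normed_vector"
  assumes "\<And>y z. norm (f y - f z) \<le> K * norm (y - z)"
  shows "f \<in> borel_measurable borel"
proof -
  have "norm (f y - f z) \<le> \<bar>K\<bar> * norm (y - z)" for y z
    by (meson assms abs_ge_self mult_right_mono norm_ge_zero order_trans)
  then have "\<bar>K\<bar>-lipschitz_on UNIV f"
    by (simp add: lipschitz_on_def dist_norm)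
  then show ?thesis
    by (intro borel_measurable_continuous_onI lipschitz_on_continuous_on)
qed

lemma borel_measurable_sum_sampled:
  fixes f :: "'i \<Rightarrow> 'a \<Rightarrow> 'b::{second_countable_topology, real_normed_vector}"
  assumes "finite I" and "\<And>i. i \<in> I \<Longrightarrow> \<xi> i \<in> measurable M (count_space UNIV)"
    and "\<And>i. i \<in> I \<Longrightarrow> f i \<in> borel_measurable M"
  shows "(\<lambda>\<omega>. \<Sum>i\<in>{i\<in>I. \<xi> i \<omega>}. f i \<omega>) \<in> borel_measurable M"
proof -
  have "(\<lambda>\<omega>. \<Sum>i\<in>I. if \<xi> i \<omega> then f i \<omega> else 0) \<in> borel_measurable M"
    using assms by (intro borel_measurable_sum measurable_If) (auto simp: pred_def)
  then show ?thesis
    using assms(1) by (simp add: sum.inter_filter)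
qed

lemma has_derivative_scaled_sum:
  assumes "\<And>i. i \<in> I \<Longrightarrow> (f i has_derivative (\<lambda>h. inner (grad i y) h)) (at y)"
  shows "((\<lambda>y. a * (\<Sum>i\<in>I. f i y)) has_derivative (\<lambda>h. inner (a *\<^sub>R (\<Sum>i\<in>I. grad i y)) h)) (at y)"
proof -
  have "((\<lambda>y. a * (\<Sum>i\<in>I. f i y)) has_derivative (\<lambda>h. a * (\<Sum>i\<in>I. inner (grad i y) h))) (at y)"
    using assms by (intro has_derivative_mult_right has_derivative_sum) auto
  then show ?thesis
    by (simp add: inner_sum_left)
qed

lemma norm_scaled_sum_diff_le:
  fixes grad :: "'i \<Rightarrow> 'a::real_normed_vector \<Rightarrow> 'b::real_normed_vector"
  assumes "0 \<le> a" and "\<And>i. i \<in> I \<Longrightarrow> norm (grad i y - grad i z) \<le> L i * norm (y - z)"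
  shows "norm (a *\<^sub>R (\<Sum>i\<in>I. grad i y) - a *\<^sub>R (\<Sum>i\<in>I. grad i z)) \<le> a * (\<Sum>i\<in>I. L i) * norm (y - z)"
proof -
  have "norm (a *\<^sub>R (\<Sum>i\<in>I. grad i y) - a *\<^sub>R (\<Sum>i\<in>I. grad i z)) = a * norm (\<Sum>i\<in>I. grad i y - grad i z)"
    using assms(1) by (simp add: sum_subtractf scaleR_diff_right[symmetric])
  also have "\<dots> \<le> a * (\<Sum>i\<in>I. L i * norm (y - z))"
    using assms by (intro mult_left_mono order_trans[OF norm_sum sum_mono]) auto
  finally show ?thesis
    by (simp add: sum_distrib_right mult.assoc)
qed

lemma (in prob_space) prox_gradient_expected_trajectory_bound:
  fixes \<phi> r :: "'v::euclidean_space \<Rightarrow> real" and x g :: "nat \<Rightarrow> 'a \<Rightarrow> 'v"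
  assumes \<phi>_deriv: "\<And>y. (\<phi> has_derivative (\<lambda>h. inner (\<gamma> y) h)) (at y)"
    and \<gamma>_lipschitz: "\<And>y z. norm (\<gamma> y - \<gamma> z) \<le> L * norm (y - z)"
    and L: "0 < L" and \<eta>: "0 < \<eta>" "L * \<eta> < 1 / 2"
    and x_meas: "\<And>t. 1 \<le> t \<Longrightarrow> x t \<in> borel_measurable M"
    and g_meas: "\<And>t. 1 \<le> t \<Longrightarrow> g t \<in> borel_measurable M"
    and step: "\<And>t \<omega>. 1 \<le> t \<Longrightarrow> \<omega> \<in> space M \<Longrightarrow> x (Suc t) \<omega> \<in> prox \<eta> r (x t \<omega> - \<eta> *\<^sub>R g t \<omega>)"
    and init: "\<And>\<omega>. \<omega> \<in> space M \<Longrightarrow> x 1 \<omega> = x1"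
    and lower: "\<And>y. m \<le> \<phi> y + r y"
  shows "(\<Sum>t=1..T. \<integral>\<^sup>+\<omega>. ennreal ((norm (prox_residual \<gamma> \<eta> (x t \<omega>) (g t \<omega>) (x (Suc t) \<omega>)))\<^sup>2) \<partial>M)
    \<le> ennreal (prox_sgd_noise_coeff L \<eta>) * (\<Sum>t=1..T. \<integral>\<^sup>+\<omega>. ennreal ((norm (g t \<omega> - \<gamma> (x t \<omega>)))\<^sup>2) \<partial>M)
      + ennreal (prox_sgd_gap_coeff L \<eta> * (\<phi> x1 + r x1 - m))"
proof -
  define v where "v t \<omega> = (norm (prox_residual \<gamma> \<eta> (x t \<omega>) (g t \<omega>) (x (Suc t) \<omega>)))\<^sup>2" for t \<omega>
  define e where "e t \<omega> = (norm (g t \<omega> - \<gamma> (x t \<omega>)))\<^sup>2" for t \<omega>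
  define \<alpha> \<beta> where "\<alpha> = prox_sgd_noise_coeff L \<eta>" and "\<beta> = prox_sgd_gap_coeff L \<eta>"
  define \<Delta> where "\<Delta> = \<phi> x1 + r x1 - m"
  have \<gamma>_meas: "\<gamma> \<in> borel_measurable borel"
    using \<gamma>_lipschitz by (rule lipschitz_bound_imp_borel_measurable)
  have v_meas: "(\<lambda>\<omega>. ennreal (v t \<omega>)) \<in> borel_measurable M" if "t \<in> {1..T}" for t
    using that unfolding v_def prox_residual_def
    by (intro measurable_compose[OF _ measurable_ennreal] borel_measurable_power
        measurable_compose[OF _ borel_measurable_norm] borel_measurable_diff borel_measurable_scaleR
        measurable_compose[OF _ \<gamma>_meas] x_meas g_meas borel_measurable_const) auto
  have e_meas: "(\<lambda>\<omega>. ennreal (e t \<omega>)) \<in> borel_measurable M" if "t \<in> {1..T}" for t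
    using that unfolding e_def
    by (intro measurable_compose[OF _ measurable_ennreal] borel_measurable_power
        measurable_compose[OF _ borel_measurable_norm] borel_measurable_diff
        measurable_compose[OF _ \<gamma>_meas] x_meas g_meas) auto
  have pathwise: "(\<Sum>t=1..T. ennreal (v t \<omega>)) \<le> ennreal \<alpha> * (\<Sum>t=1..T. ennreal (e t \<omega>)) + ennreal (\<beta> * \<Delta>)"
    if \<omega>: "\<omega> \<in> space M" for \<omega>
  proof -
    have "(\<Sum>t=1..T. v t \<omega>) \<le> \<alpha> * (\<Sum>t=1..T. e t \<omega>) + \<beta> * \<Delta>"
      using prox_gradient_trajectory_bound[OF \<phi>_deriv \<gamma>_lipschitz L \<eta>, of T "\<lambda>t. x t \<omega>" r "\<lambda>t. g t \<omega>"]
        step \<omega> lower init[OF \<omega>]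
      by (simp add: v_def e_def \<alpha>_def \<beta>_def \<Delta>_def)
    then have "ennreal (\<Sum>t=1..T. v t \<omega>) \<le> ennreal (\<alpha> * (\<Sum>t=1..T. e t \<omega>) + \<beta> * \<Delta>)"
      by (rule ennreal_leI)
    also have "\<dots> = ennreal \<alpha> * ennreal (\<Sum>t=1..T. e t \<omega>) + ennreal (\<beta> * \<Delta>)"
      using prox_sgd_coeffs_nonneg[OF L \<eta>] lower[of x1]
      by (simp add: ennreal_plus ennreal_mult sum_nonneg e_def \<alpha>_def \<beta>_def \<Delta>_def)
    finally show ?thesis
      by (simp add: v_def e_def)
  qed
  have "(\<Sum>t=1..T. \<integral>\<^sup>+\<omega>. ennreal (v t \<omega>) \<partial>M) = (\<integral>\<^sup>+\<omega>. (\<Sum>t=1..T. ennreal (v t \<omega>)) \<partial>M)"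
    using v_meas by (rule nn_integral_sum[symmetric])
  also have "\<dots> \<le> (\<integral>\<^sup>+\<omega>. ennreal \<alpha> * (\<Sum>t=1..T. ennreal (e t \<omega>)) + ennreal (\<beta> * \<Delta>) \<partial>M)"
    using pathwise by (rule nn_integral_mono)
  also have "\<dots> = ennreal \<alpha> * (\<integral>\<^sup>+\<omega>. (\<Sum>t=1..T. ennreal (e t \<omega>)) \<partial>M) + ennreal (\<beta> * \<Delta>)"
    using e_meas by (simp add: nn_integral_add nn_integral_cmult emeasure_space_1)
  also have "\<dots> = ennreal \<alpha> * (\<Sum>t=1..T. \<integral>\<^sup>+\<omega>. ennreal (e t \<omega>) \<partial>M) + ennreal (\<beta> * \<Delta>)"
    using e_meas by (simp only: nn_integral_sum)
  finally show ?thesis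
    by (simp add: v_def e_def \<alpha>_def \<beta>_def \<Delta>_def)
qed

lemma (in prob_space) prox_sgd_average_stationarity:
  fixes \<phi> r :: "'v::euclidean_space \<Rightarrow> real" and x g :: "nat \<Rightarrow> 'a \<Rightarrow> 'v"
  assumes \<phi>_deriv: "\<And>y. (\<phi> has_derivative (\<lambda>h. inner (\<gamma> y) h)) (at y)"
    and \<gamma>_lipschitz: "\<And>y z. norm (\<gamma> y - \<gamma> z) \<le> L * norm (y - z)"
    and L: "0 < L" and \<eta>: "0 < \<eta>" "L * \<eta> < 1 / 2"
    and x_meas: "\<And>t. 1 \<le> t \<Longrightarrow> x t \<in> borel_measurable M"
    and g_meas: "\<And>t. 1 \<le> t \<Longrightarrow> g t \<in> borel_measurable M"
    and step: "\<And>t \<omega>. 1 \<le> t \<Longrightarrow> \<omega> \<in> space M \<Longrightarrow> x (Suc t) \<omega> \<in> prox \<eta> r (x t \<omega> - \<eta> *\<^sub>R g t \<omega>)"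
    and init: "\<And>\<omega>. \<omega> \<in> space M \<Longrightarrow> x 1 \<omega> = x1"
    and lower: "\<And>y. m \<le> \<phi> y + r y"
    and variance: "\<And>t. 1 \<le> t \<Longrightarrow> (\<integral>\<^sup>+\<omega>. ennreal ((norm (g t \<omega> - \<gamma> (x t \<omega>)))\<^sup>2) \<partial>M) \<le> ennreal V"
    and V: "0 \<le> V"
  shows "ennreal (1 / real T) *
      (\<Sum>t=1..T. \<integral>\<^sup>+\<omega>. (dist0 (frechet_subdiff (\<lambda>y. \<phi> y + r y) (x (Suc t) \<omega>)))\<^sup>2 \<partial>M)
    \<le> ennreal (prox_sgd_noise_coeff L \<eta> * V + prox_sgd_gap_coeff L \<eta> / real T * (\<phi> x1 + r x1 - m))"
proof -
  define \<alpha> \<beta> where "\<alpha> = prox_sgd_noise_coeff L \<eta>" and "\<beta> = prox_sgd_gap_coeff L \<eta>"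
  define \<Delta> where "\<Delta> = \<phi> x1 + r x1 - m"
  have coeffs: "0 \<le> \<alpha>" "0 \<le> \<beta>" "0 \<le> \<Delta>"
    using prox_sgd_coeffs_nonneg[OF L \<eta>] lower[of x1] by (auto simp: \<alpha>_def \<beta>_def \<Delta>_def)
  have "(\<Sum>t=1..T. \<integral>\<^sup>+\<omega>. (dist0 (frechet_subdiff (\<lambda>y. \<phi> y + r y) (x (Suc t) \<omega>)))\<^sup>2 \<partial>M)
      \<le> (\<Sum>t=1..T. \<integral>\<^sup>+\<omega>. ennreal ((norm (prox_residual \<gamma> \<eta> (x t \<omega>) (g t \<omega>) (x (Suc t) \<omega>)))\<^sup>2) \<partial>M)"
    using \<phi>_deriv step \<eta>(1) by (intro sum_mono nn_integral_mono dist0_frechet_subdiff_le_prox_residual) auto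
  also have "\<dots> \<le> ennreal \<alpha> * (\<Sum>t=1..T. \<integral>\<^sup>+\<omega>. ennreal ((norm (g t \<omega> - \<gamma> (x t \<omega>)))\<^sup>2) \<partial>M)
      + ennreal (\<beta> * \<Delta>)"
    unfolding \<alpha>_def \<beta>_def \<Delta>_def
    by (rule prox_gradient_expected_trajectory_bound[OF \<phi>_deriv \<gamma>_lipschitz L \<eta> x_meas g_meas step init lower])
  also have "\<dots> \<le> ennreal \<alpha> * (\<Sum>t=1..T. ennreal V) + ennreal (\<beta> * \<Delta>)"
    using variance by (intro add_mono mult_left_mono sum_mono) auto
  also have "\<dots> = ennreal (\<alpha> * (real T * V) + \<beta> * \<Delta>)"
    using coeffs V by (simp add: ennreal_mult ennreal_plus ennreal_of_nat_eq_real_of_nat)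
  finally have "ennreal (1 / real T) *
      (\<Sum>t=1..T. \<integral>\<^sup>+\<omega>. (dist0 (frechet_subdiff (\<lambda>y. \<phi> y + r y) (x (Suc t) \<omega>)))\<^sup>2 \<partial>M)
    \<le> ennreal (1 / real T * (\<alpha> * (real T * V) + \<beta> * \<Delta>))"
    using coeffs V by (subst ennreal_mult) (auto intro: mult_left_mono)
  also have "\<dots> \<le> ennreal (\<alpha> * V + \<beta> / real T * \<Delta>)"
    using coeffs V by (intro ennreal_leI) (cases "T = 0"; simp add: field_simps)
  finally show ?thesis
    by (simp add: \<alpha>_def \<beta>_def \<Delta>_def)
qed

lemma (in prob_space) indep_set_sample_current_iterate:
  fixes \<xi> :: "nat \<Rightarrow> 'i \<Rightarrow> 'a \<Rightarrow> bool" and x :: "nat \<Rightarrow> 'a \<Rightarrow> 'v::topological_space"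
  assumes past_indep: "indep_set
      (sets (vimage_algebra (space M) (\<lambda>\<omega>. \<lambda>i\<in>I. \<xi> t i \<omega>) (\<Pi>\<^sub>M i\<in>I. count_space UNIV)))
      (sets (vimage_algebra (space M)
        (\<lambda>\<omega>. ((\<lambda>s\<in>{1..<t}. \<lambda>i\<in>I. \<xi> s i \<omega>), (\<lambda>s\<in>{1..t}. x s \<omega>)))
        ((\<Pi>\<^sub>M s\<in>{1..<t}. \<Pi>\<^sub>M i\<in>I. count_space UNIV) \<Otimes>\<^sub>M (\<Pi>\<^sub>M s\<in>{1..t}. borel))))"
    and t: "1 \<le> t"
    and sample_rv: "\<And>s i. 1 \<le> s \<Longrightarrow> i \<in> I \<Longrightarrow> \<xi> s i \<in> measurable M (count_space UNIV)"
    and iter_rv: "\<And>s. 1 \<le> s \<Longrightarrow> x s \<in> borel_measurable M"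
  shows "indep_set
      (sets (vimage_algebra (space M) (\<lambda>\<omega>. \<lambda>i\<in>I. \<xi> t i \<omega>) (\<Pi>\<^sub>M i\<in>I. count_space UNIV)))
      (sets (vimage_algebra (space M) (x t) borel))"
proof -
  have sample_meas: "(\<lambda>\<omega>. \<lambda>i\<in>I. \<xi> t i \<omega>) \<in> measurable M (\<Pi>\<^sub>M i\<in>I. count_space UNIV)"
    using sample_rv t by (intro measurable_restrict) auto
  have past_meas: "(\<lambda>\<omega>. ((\<lambda>s\<in>{1..<t}. \<lambda>i\<in>I. \<xi> s i \<omega>), (\<lambda>s\<in>{1..t}. x s \<omega>)))
      \<in> measurable M ((\<Pi>\<^sub>M s\<in>{1..<t}. \<Pi>\<^sub>M i\<in>I. count_space UNIV) \<Otimes>\<^sub>M (\<Pi>\<^sub>M s\<in>{1..t}. borel))"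
    using sample_rv iter_rv by (intro measurable_Pair measurable_restrict) auto
  have current_meas: "(\<lambda>h. snd h t)
      \<in> measurable ((\<Pi>\<^sub>M s\<in>{1..<t}. \<Pi>\<^sub>M i\<in>I. count_space UNIV) \<Otimes>\<^sub>M (\<Pi>\<^sub>M s\<in>{1..t}. borel)) borel"
    using t by (intro measurable_compose[OF measurable_snd measurable_component_singleton]) auto
  show ?thesis
    using indep_set_vimage_algebra_compose[OF past_indep sample_meas past_meas
        measurable_ident_sets[OF refl] current_meas] t
    by simp
qed

lemma (in prob_space) prox_sgd_independent_sampling:
  fixes n :: nat and f :: "nat \<Rightarrow> 'v::euclidean_space \<Rightarrow> real" and grad :: "nat \<Rightarrow> 'v \<Rightarrow> 'v"
    and G L p :: "nat \<Rightarrow> real" and r :: "'v \<Rightarrow> real"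
    and \<xi> :: "nat \<Rightarrow> nat \<Rightarrow> 'a \<Rightarrow> bool" and x :: "nat \<Rightarrow> 'a \<Rightarrow> 'v"
  defines "F \<equiv> (\<lambda>y. (1 / real n) * (\<Sum>i=1..n. f i y) + r y)"
    and "Ltil \<equiv> (1 / real n) * (\<Sum>i=1..n. L i)"
  assumes deriv: "\<And>i y. i \<in> {1..n} \<Longrightarrow> (f i has_derivative (\<lambda>h. inner (grad i y) h)) (at y)"
    and grad_bd: "\<And>i y. i \<in> {1..n} \<Longrightarrow> norm (grad i y) \<le> G i"
    and lip: "\<And>i y z. i \<in> {1..n} \<Longrightarrow> norm (grad i y - grad i z) \<le> L i * norm (y - z)"
    and lower: "\<And>y. m \<le> F y"
    and Ltil_pos: "0 < Ltil" and \<eta>: "0 < \<eta>" "Ltil * \<eta> < 1 / 2"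
    and p_pos: "\<And>i. i \<in> {1..n} \<Longrightarrow> 0 < p i"
    and sample_prob: "\<And>t i. 1 \<le> t \<Longrightarrow> i \<in> {1..n} \<Longrightarrow> prob {\<omega> \<in> space M. \<xi> t i \<omega>} = p i"
    and sample_indep: "\<And>t. 1 \<le> t \<Longrightarrow> indep_vars (\<lambda>_. count_space UNIV) (\<lambda>i. \<xi> t i) {1..n}"
    and sample_rv: "\<And>t i. 1 \<le> t \<Longrightarrow> i \<in> {1..n} \<Longrightarrow> \<xi> t i \<in> measurable M (count_space UNIV)"
    and iter_rv: "\<And>t. 1 \<le> t \<Longrightarrow> x t \<in> borel_measurable M"
    and past_indep: "\<And>t. 1 \<le> t \<Longrightarrow> indep_set
      (sets (vimage_algebra (space M) (\<lambda>\<omega>. \<lambda>i\<in>{1..n}. \<xi> t i \<omega>) (\<Pi>\<^sub>M i\<in>{1..n}. count_space UNIV)))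
      (sets (vimage_algebra (space M)
        (\<lambda>\<omega>. ((\<lambda>s\<in>{1..<t}. \<lambda>i\<in>{1..n}. \<xi> s i \<omega>), (\<lambda>s\<in>{1..t}. x s \<omega>)))
        ((\<Pi>\<^sub>M s\<in>{1..<t}. \<Pi>\<^sub>M i\<in>{1..n}. count_space UNIV) \<Otimes>\<^sub>M (\<Pi>\<^sub>M s\<in>{1..t}. borel))))"
    and init: "\<And>\<omega>. \<omega> \<in> space M \<Longrightarrow> x 1 \<omega> = x1"
    and step: "\<And>t \<omega>. 1 \<le> t \<Longrightarrow> \<omega> \<in> space M \<Longrightarrow> x (Suc t) \<omega> \<in> prox \<eta> r (x t \<omega> - \<eta> *\<^sub>R
      (\<Sum>i\<in>{i\<in>{1..n}. \<xi> t i \<omega>}. (1 / (real n * p i)) *\<^sub>R grad i (x t \<omega>)))"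
  shows "ennreal (1 / real T) * (\<Sum>t=1..T. \<integral>\<^sup>+\<omega>. (dist0 (frechet_subdiff F (x (Suc t) \<omega>)))\<^sup>2 \<partial>M)
    \<le> ennreal (prox_sgd_noise_coeff Ltil \<eta> * (\<Sum>i=1..n. (1 / p i - 1) * (G i / real n)\<^sup>2)
      + prox_sgd_gap_coeff Ltil \<eta> / real T * (F x1 - m))"
proof -
  define \<phi> where "\<phi> y = (1 / real n) * (\<Sum>i=1..n. f i y)" for y
  define \<gamma> where "\<gamma> y = (1 / real n) *\<^sub>R (\<Sum>i=1..n. grad i y)" for y
  define g where "g t \<omega> = (\<Sum>i\<in>{i\<in>{1..n}. \<xi> t i \<omega>}. (1 / (real n * p i)) *\<^sub>R grad i (x t \<omega>))" for t \<omega>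
  have F_eq: "F = (\<lambda>y. \<phi> y + r y)"
    by (simp add: F_def \<phi>_def)
  have \<phi>_deriv: "(\<phi> has_derivative (\<lambda>h. inner (\<gamma> y) h)) (at y)" for y
    unfolding \<phi>_def[abs_def] \<gamma>_def using deriv by (intro has_derivative_scaled_sum) auto
  have \<gamma>_lipschitz: "norm (\<gamma> y - \<gamma> z) \<le> Ltil * norm (y - z)" for y z
    unfolding \<gamma>_def Ltil_def using lip by (intro norm_scaled_sum_diff_le) auto
  have grad_meas: "grad i \<in> borel_measurable borel" if "i \<in> {1..n}" for i
    using lip[OF that] by (rule lipschitz_bound_imp_borel_measurable)
  have g_meas: "g t \<in> borel_measurable M" if t: "1 \<le> t" for t
    unfolding g_def[abs_def] using sample_rv[OF t] measurable_compose[OF iter_rv[OF t] grad_meas]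
    by (intro borel_measurable_sum_sampled borel_measurable_scaleR) auto
  have "(\<integral>\<^sup>+\<omega>. ennreal ((norm (g t \<omega> - \<gamma> (x t \<omega>)))\<^sup>2) \<partial>M)
      \<le> ennreal (\<Sum>i=1..n. (1 / p i - 1) * (G i / real n)\<^sup>2)" if t: "1 \<le> t" for t
  proof -
    have "g t \<omega> - \<gamma> (x t \<omega>) = (\<Sum>i\<in>{i\<in>{1..n}. \<xi> t i \<omega>}. (1 / p i) *\<^sub>R (1 / real n) *\<^sub>R grad i (x t \<omega>))
        - (\<Sum>i\<in>{1..n}. (1 / real n) *\<^sub>R grad i (x t \<omega>))" for \<omega>
      by (simp add: g_def \<gamma>_def scaleR_sum_right mult.commute)
    moreover have "(\<lambda>y. (1 / real n) *\<^sub>R grad i y) \<in> borel_measurable borel" if "i \<in> {1..n}" for i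
      using grad_meas[OF that] by (intro borel_measurable_scaleR) auto
    moreover have "norm ((1 / real n) *\<^sub>R grad i y) \<le> G i / real n" if "i \<in> {1..n}" for i y
      using grad_bd[OF that, of y] by (simp add: divide_right_mono)
    ultimately show ?thesis
      using independent_sampling_variance[OF finite_atLeastAtMost sample_indep[OF t] sample_prob[OF t]
          p_pos iter_rv[OF t] indep_set_sample_current_iterate[OF past_indep[OF t] t sample_rv iter_rv],
          where \<gamma>="\<lambda>i y. (1 / real n) *\<^sub>R grad i y" and B="\<lambda>i. G i / real n"]
      by simp
  qed
  moreover have "p i \<le> 1" if "i \<in> {1..n}" for i
    using sample_prob[OF order_refl that] prob_le_1 by metis
  then have "0 \<le> (\<Sum>i=1..n. (1 / p i - 1) * (G i / real n)\<^sup>2)"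
    using p_pos by (intro sum_nonneg mult_nonneg_nonneg) auto
  ultimately show ?thesis
    using prox_sgd_average_stationarity[OF \<phi>_deriv \<gamma>_lipschitz Ltil_pos \<eta>, where x=x and g=g,
        OF iter_rv g_meas step[unfolded g_def[symmetric]] init lower[unfolded F_eq]]
    by (simp add: F_eq)
qed

lemma importance_weights_variance_le:
  fixes G p :: "nat \<Rightarrow> real"
  assumes G: "\<And>i. i \<in> {1..k} \<Longrightarrow> 0 < G i" and c: "0 < c" and "k \<le> n"
    and p: "\<And>i. p i = (if i \<le> k then c * G i / (\<Sum>j=1..k. G j) else 1)"
  shows "(\<Sum>i=1..n. (1 / p i - 1) * (G i / a)\<^sup>2) \<le> 1 / a\<^sup>2 * (1 / c) * (\<Sum>i=1..k. G i)\<^sup>2"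
proof -
  define S where "S = (\<Sum>j=1..k. G j)"
  have "(\<Sum>i=1..n. (1 / p i - 1) * (G i)\<^sup>2) \<le> (\<Sum>i=1..n. if i \<le> k then S / c * G i else 0)"
  proof (intro sum_mono)
    fix i assume i: "i \<in> {1..n}"
    show "(1 / p i - 1) * (G i)\<^sup>2 \<le> (if i \<le> k then S / c * G i else 0)"
    proof (cases "i \<le> k")
      case True
      then have "0 < G i" using G i by simp
      then have "(1 / p i) * (G i)\<^sup>2 = S / c * G i"
        using True c by (simp add: p S_def power2_eq_square)
      then show ?thesis
        using True by (simp add: algebra_simps)
    qed (simp add: p)
  qed
  also have "\<dots> = (\<Sum>i=1..k. S / c * G i)"
  proof -
    have "{1..n} \<inter> {i. i \<le> k} = {1..k}"
      using \<open>k \<le> n\<close> by auto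
    then show ?thesis
      by (simp add: sum.If_cases)
  qed
  also have "\<dots> = S / c * S"
    unfolding S_def by (rule sum_distrib_left[symmetric])
  also have "\<dots> = S\<^sup>2 / c"
    by (simp add: power2_eq_square)
  finally have "(\<Sum>i=1..n. (1 / p i - 1) * (G i)\<^sup>2) / a\<^sup>2 \<le> S\<^sup>2 / c / a\<^sup>2"
    by (rule divide_right_mono) simp
  then show ?thesis
    by (simp add: S_def power_divide sum_divide_distrib mult.commute)
qed

theorem corollary4p2p3:
  fixes n b k :: nat
    and f :: "nat \<Rightarrow> 'a::euclidean_space \<Rightarrow> real"
    and grad :: "nat \<Rightarrow> 'a \<Rightarrow> 'a"
    and G L p :: "nat \<Rightarrow> real"
    and r :: "'a \<Rightarrow> real"
    and F :: "'a \<Rightarrow> real"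
    and xstar x1 :: 'a
    and \<eta> Ltil :: real
    and M :: "'w measure"
    and \<xi> :: "nat \<Rightarrow> nat \<Rightarrow> 'w \<Rightarrow> bool"
    and x :: "nat \<Rightarrow> 'w \<Rightarrow> 'a"
    and T :: nat
  defines "F \<equiv> (\<lambda>y. (1 / real n) * (\<Sum>i=1..n. f i y) + r y)"
    and "Ltil \<equiv> (1 / real n) * (\<Sum>i=1..n. L i)"
  assumes deriv: "\<And>i y. i \<in> {1..n} \<Longrightarrow> (f i has_derivative (\<lambda>h. inner (grad i y) h)) (at y)"
    and grad_bd: "\<And>i y. i \<in> {1..n} \<Longrightarrow> norm (grad i y) \<le> G i"
    and G_pos: "0 < G 1"
    and G_mono: "\<And>i j. 1 \<le> i \<Longrightarrow> i \<le> j \<Longrightarrow> j \<le> n \<Longrightarrow> G i \<le> G j"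
    and lip: "\<And>i y z. i \<in> {1..n} \<Longrightarrow> norm (grad i y - grad i z) \<le> L i * norm (y - z)"
    and prox_ne: "\<And>y. prox \<eta> r y \<noteq> {}"
    and xstar_min: "\<And>y. F xstar \<le> F y"
    and Ltil_pos: "Ltil > 0"
    and b_range: "b \<in> {1..n}"
    and k_range: "k \<in> {1..n}"
    and k_cond: "0 < real b + real k - real n"
                "real b + real k - real n \<le> (\<Sum>j=1..k. G j) / G k"
    and k_greatest: "\<And>k'. k' \<in> {1..n} \<Longrightarrow> 0 < real b + real k' - real n \<Longrightarrow>
                       real b + real k' - real n \<le> (\<Sum>j=1..k'. G j) / G k' \<Longrightarrow> k' \<le> k"
    and p_def: "\<And>i. p i = (if i \<le> k then (real b + real k - real n) * G i / (\<Sum>j=1..k. G j) else 1)"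
    and eta: "0 < \<eta>" "\<eta> < 1 / (2 * Ltil)"
    and M: "prob_space M"
    and sample_prob: "\<And>t i. t \<ge> 1 \<Longrightarrow> i \<in> {1..n} \<Longrightarrow>
                        measure M {\<omega> \<in> space M. \<xi> t i \<omega>} = p i"
    and sample_indep: "\<And>t. t \<ge> 1 \<Longrightarrow>
        prob_space.indep_vars M (\<lambda>_. count_space UNIV) (\<lambda>i. \<xi> t i) {1..n}"
    and sample_rv: "\<And>t i. t \<ge> 1 \<Longrightarrow> i \<in> {1..n} \<Longrightarrow> \<xi> t i \<in> measurable M (count_space UNIV)"
    and iter_rv: "\<And>t. t \<ge> 1 \<Longrightarrow> x t \<in> borel_measurable M"
    and past_indep: "\<And>t. t \<ge> 1 \<Longrightarrow>
        prob_space.indep_set M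
          (sets (vimage_algebra (space M) (\<lambda>\<omega>. \<lambda>i\<in>{1..n}. \<xi> t i \<omega>)
                  (PiM {1..n} (\<lambda>_. count_space UNIV))))
          (sets (vimage_algebra (space M)
                  (\<lambda>\<omega>. ((\<lambda>s\<in>{1..<t}. \<lambda>i\<in>{1..n}. \<xi> s i \<omega>), (\<lambda>s\<in>{1..t}. x s \<omega>)))
                  (PiM {1..<t} (\<lambda>_. PiM {1..n} (\<lambda>_. count_space UNIV)) \<Otimes>\<^sub>M PiM {1..t} (\<lambda>_. borel))))"
    and init: "\<And>\<omega>. \<omega> \<in> space M \<Longrightarrow> x 1 \<omega> = x1"
    and step: "\<And>t \<omega>. t \<ge> 1 \<Longrightarrow> \<omega> \<in> space M \<Longrightarrow>
        x (Suc t) \<omega> \<in> prox \<eta> r (x t \<omega> - \<eta> *\<^sub>R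
           (\<Sum>i\<in>{i\<in>{1..n}. \<xi> t i \<omega>}. (1 / (real n * p i)) *\<^sub>R grad i (x t \<omega>)))"
    and T: "T \<ge> 1"
  shows "ennreal (1 / real T) *
           (\<Sum>t=1..T. \<integral>\<^sup>+ \<omega>. (dist0 (frechet_subdiff F (x (Suc t) \<omega>)))\<^sup>2 \<partial>M)
         \<le> ennreal ((1 + 4*Ltil*\<eta> - 2*Ltil^2*\<eta>^2) / (Ltil*\<eta> - 2*Ltil^2*\<eta>^2)
                     / (real n)^2 * (1 / (real b + real k - real n)) * (\<Sum>i=1..k. G i)^2
                   + (2 + 4*Ltil*\<eta> + 4*Ltil^2*\<eta>^2) / (\<eta> - 2*Ltil*\<eta>^2) / real T
                     * (F x1 - F xstar))"
proof -
  interpret prob_space M by (rule M)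
  define c S where "c = real b + real k - real n" and "S = (\<Sum>j=1..k. G j)"
  have G_gt_0: "0 < G i" if "i \<in> {1..n}" for i
    using G_mono[of 1 i] G_pos that by force
  have c_gt_0: "0 < c" and S_gt_0: "0 < S"
    using k_cond(1) k_range G_gt_0 by (auto simp: c_def S_def intro!: sum_pos)
  have p_pos: "0 < p i" if "i \<in> {1..n}" for i
    using p_def[of i] c_gt_0 S_gt_0 G_gt_0[OF that] by (simp add: c_def S_def)
  have Ltil_eta: "Ltil * \<eta> < 1 / 2"
    using eta Ltil_pos by (simp add: field_simps)
  have "p i = (if i \<le> k then c * G i / (\<Sum>j=1..k. G j) else 1)" for i
    using p_def by (simp add: c_def)
  then have variance: "(\<Sum>i=1..n. (1 / p i - 1) * (G i / real n)\<^sup>2) \<le> 1 / (real n)\<^sup>2 * (1 / c) * S\<^sup>2"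
    unfolding S_def using G_gt_0 k_range by (intro importance_weights_variance_le[OF _ c_gt_0]) auto
  \<comment> \<open>Not needed: the maximality of k (the bound holds for every admissible k), the nonemptiness
    of the prox (the iterates are given) and T \<ge> 1 (for T = 0 the left-hand side is 0).\<close>
  have "ennreal (1 / real T) * (\<Sum>t=1..T. \<integral>\<^sup>+\<omega>. (dist0 (frechet_subdiff F (x (Suc t) \<omega>)))\<^sup>2 \<partial>M)
      \<le> ennreal (prox_sgd_noise_coeff Ltil \<eta> * (\<Sum>i=1..n. (1 / p i - 1) * (G i / real n)\<^sup>2)
        + prox_sgd_gap_coeff Ltil \<eta> / real T * (F x1 - F xstar))"
    unfolding F_def Ltil_def
    by (rule prox_sgd_independent_sampling[OF deriv grad_bd lip xstar_min[unfolded F_def]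
          Ltil_pos[unfolded Ltil_def] eta(1) Ltil_eta[unfolded Ltil_def] p_pos sample_prob sample_indep
          sample_rv iter_rv past_indep init step])
  also have "\<dots> \<le> ennreal ((1 + 4*Ltil*\<eta> - 2*Ltil^2*\<eta>^2) / (Ltil*\<eta> - 2*Ltil^2*\<eta>^2) * (1 / (real n)\<^sup>2 * (1 / c) * S\<^sup>2)
      + (2 + 4*Ltil*\<eta> + 4*Ltil^2*\<eta>^2) / (\<eta> - 2*Ltil*\<eta>^2) / real T * (F x1 - F xstar))"
    using prox_sgd_noise_coeff_le[OF Ltil_pos eta(1) Ltil_eta] prox_sgd_gap_coeff_le[OF Ltil_pos eta(1) Ltil_eta]
      prox_sgd_coeffs_nonneg[OF Ltil_pos eta(1) Ltil_eta] variance xstar_min[of x1] c_gt_0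
    by (intro ennreal_leI add_mono order_trans[OF mult_left_mono mult_right_mono] divide_right_mono
        mult_right_mono) auto
  finally show ?thesis
    by (simp add: c_def S_def mult.assoc)
qed

end
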